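(* Let $P$ be a pasture with at most one fundamental element. Then every matroid $M$ has at most one rescaling class of $P$-representations; i.e. any two $P$-representations of $M$ are rescaling equivalent.
   Context: A pasture is a commutative monoid $P$ with absorbing $0$ such that $P^\times=P\setminus\{0\}$ is a group, with a null set $N_P$ of formal sums $a+b+c$ satisfying: $a+0+0\in N_P$ iff $a=0$; closure under multiplying all terms by any $d\in P$; a unique $\epsilon$ with $1+\epsilon+0\in N_P$ (write $-a=\epsilon a$; "$a+b=c$" means $a+b+(-c)\in N_P$). A fundamental element of $P$ is $z\in P^\times$ with $z+z'=1$ for some $z'\in P^\times$. For a matroid $M$ of rank $r$ on finite $E$, a $P$-representation is $\Delta:E^r\to P$ with $\Delta(e_1,\dots,e_r)\neq0$ iff $\{e_1,\dots,e_r\}$ is a basis, $\Delta(e_{\sigma(1)},\dots,e_{\sigma(r)})=\mathrm{sign}(\sigma)\Delta(e_1,\dots,e_r)$, and $\Delta(\mathbf Je_1e_2)\Delta(\mathbf Je_3e_4)-\Delta(\mathbf Je_1e_3)\Delta(\mathbf Je_2e_4)+\Delta(\mathbf Je_1e_4)\Delta(\mathbf Je_2e_3)\in N_P$ for all $\mathbf J\in E^{r-2}$, $e_1,\dots,e_4\in E$ (concatenated tuples). $\Delta,\Delta'$ are rescaling equivalent if $\Delta'(e_1,\dots,e_r)=c\,d(e_1)\cdots d(e_r)\Delta(e_1,\dots,e_r)$ for some $c\in P^\times$, $d:E\to P^\times$. *)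

theory Defs
  imports "HOL-Combinatorics.Permutations"
begin

text \<open>A pasture is given on the carrier UNIV of a type 'p by a multiplication,
  a unit, a zero, and a null set of formal sums a+b+c, represented as triples
  (the null set is required to be closed under permuting the three terms,
  so that it is a set of unordered formal sums).\<close>

definition pasture :: "('p \<Rightarrow> 'p \<Rightarrow> 'p) \<Rightarrow> 'p \<Rightarrow> 'p \<Rightarrow> ('p \<times> 'p \<times> 'p) set \<Rightarrow> bool" where
  "pasture pm one zero N \<longleftrightarrow>
     (\<forall>a b c. pm (pm a b) c = pm a (pm b c)) \<and>
     (\<forall>a b. pm a b = pm b a) \<and>
     (\<forall>a. pm one a = a) \<and>
     (\<forall>a. pm zero a = zero) \<and>
     one \<noteq> zero \<and>
     (\<forall>a b. a \<noteq> zero \<and> b \<noteq> zero \<longrightarrow> pm a b \<noteq> zero) \<and>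
     (\<forall>a. a \<noteq> zero \<longrightarrow> (\<exists>b. b \<noteq> zero \<and> pm a b = one)) \<and>
     (\<forall>a b c. (a, b, c) \<in> N \<longrightarrow> (b, a, c) \<in> N \<and> (b, c, a) \<in> N) \<and>
     (\<forall>a. (a, zero, zero) \<in> N \<longleftrightarrow> a = zero) \<and>
     (\<forall>a b c d. (a, b, c) \<in> N \<longrightarrow> (pm d a, pm d b, pm d c) \<in> N) \<and>
     (\<exists>!e. (one, e, zero) \<in> N)"

definition pepsilon :: "'p \<Rightarrow> 'p \<Rightarrow> ('p \<times> 'p \<times> 'p) set \<Rightarrow> 'p" where
  "pepsilon one zero N = (THE e. (one, e, zero) \<in> N)"

text \<open>z is fundamental iff z is a unit and z + z' = 1 for some unit z',
  i.e. z + z' + (-1) is in the null set, where -1 = epsilon.\<close>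
definition fundamental :: "('p \<Rightarrow> 'p \<Rightarrow> 'p) \<Rightarrow> 'p \<Rightarrow> 'p \<Rightarrow> ('p \<times> 'p \<times> 'p) set \<Rightarrow> 'p \<Rightarrow> bool" where
  "fundamental pm one zero N z \<longleftrightarrow>
     z \<noteq> zero \<and> (\<exists>z'. z' \<noteq> zero \<and> (z, z', pm (pepsilon one zero N) one) \<in> N)"

definition matroid :: "'e set \<Rightarrow> 'e set set \<Rightarrow> bool" where
  "matroid E \<B> \<longleftrightarrow> finite E \<and> \<B> \<subseteq> Pow E \<and> \<B> \<noteq> {} \<and>
     (\<forall>B1\<in>\<B>. \<forall>B2\<in>\<B>. \<forall>x\<in>B1 - B2. \<exists>y\<in>B2 - B1. insert y (B1 - {x}) \<in> \<B>)"

definition matroid_rank :: "'e set \<Rightarrow> 'e set set \<Rightarrow> nat \<Rightarrow> bool" where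
  "matroid_rank E \<B> r \<longleftrightarrow> matroid E \<B> \<and> (\<forall>B\<in>\<B>. card B = r)"

definition tuples :: "'e set \<Rightarrow> nat \<Rightarrow> 'e list set" where
  "tuples E r = {xs. set xs \<subseteq> E \<and> length xs = r}"

definition P_rep ::
  "('p \<Rightarrow> 'p \<Rightarrow> 'p) \<Rightarrow> 'p \<Rightarrow> 'p \<Rightarrow> ('p \<times> 'p \<times> 'p) set \<Rightarrow>
   'e set \<Rightarrow> 'e set set \<Rightarrow> nat \<Rightarrow> ('e list \<Rightarrow> 'p) \<Rightarrow> bool" where
  "P_rep pm one zero N E \<B> r \<Delta> \<longleftrightarrow>
     (let eps = pepsilon one zero N in
     (\<forall>xs\<in>tuples E r. \<Delta> xs \<noteq> zero \<longleftrightarrow> set xs \<in> \<B>) \<and>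
     (\<forall>xs\<in>tuples E r. \<forall>\<sigma>. \<sigma> permutes {..<r} \<longrightarrow>
        \<Delta> (map (\<lambda>i. xs ! \<sigma> i) [0..<r]) =
          (if sign \<sigma> = 1 then \<Delta> xs else pm eps (\<Delta> xs))) \<and>
     (2 \<le> r \<longrightarrow>
       (\<forall>J\<in>tuples E (r - 2). \<forall>e1\<in>E. \<forall>e2\<in>E. \<forall>e3\<in>E. \<forall>e4\<in>E.
          (pm (\<Delta> (J @ [e1, e2])) (\<Delta> (J @ [e3, e4])),
           pm eps (pm (\<Delta> (J @ [e1, e3])) (\<Delta> (J @ [e2, e4]))),
           pm (\<Delta> (J @ [e1, e4])) (\<Delta> (J @ [e2, e3]))) \<in> N)))"

definition rescaling_equiv ::
  "('p \<Rightarrow> 'p \<Rightarrow> 'p) \<Rightarrow> 'p \<Rightarrow> 'p \<Rightarrow> 'e set \<Rightarrow> nat \<Rightarrow>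
   ('e list \<Rightarrow> 'p) \<Rightarrow> ('e list \<Rightarrow> 'p) \<Rightarrow> bool" where
  "rescaling_equiv pm one zero E r \<Delta> \<Delta>' \<longleftrightarrow>
     (\<exists>c d. c \<noteq> zero \<and> (\<forall>e\<in>E. d e \<noteq> zero) \<and>
        (\<forall>xs\<in>tuples E r.
           \<Delta>' xs = pm c (pm (foldr (\<lambda>x acc. pm (d x) acc) xs one) (\<Delta> xs))))"

end

theory Submission
  imports Defs "HOL-Algebra.FiniteProduct"
begin

(* Let \<Delta> and \<Delta>' be P-representations of M. On bases, the ratio f(B) = \<Delta>'(B) / \<Delta>(B) is a
   well-defined unit of P, since both change by the same sign under permuting the arguments.
   Dividing a three-term Pluecker relation a + b + c by -c exhibits two fundamental elements
   -a/c and b/c; when P has at most one fundamental element, this forces the cross ratio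
   \<Delta>(Jac)\<Delta>(Jbd) / \<Delta>(Jab)\<Delta>(Jcd) to be 1 or -1 according to whether \<Delta>(Jad)\<Delta>(Jbc) vanishes,
   which depends on M alone. Hence f(Jab) f(Jcd) = f(Jac) f(Jbd) whenever these four sets are
   bases.

   Every such map from the bases to an abelian group is a rescaling B \<mapsto> c \<Prod>e\<in>B. d e.
   Fix a basis B0 and weight the edge x y of its exchange graph by f(B0 - x + y) / f(B0). The
   weight of every closed walk is 1: repeated vertices and chords split it into shorter closed
   walks, 4-cycles are Pluecker relations, and a longer chordless cycle x1 y1 x2 ... yk x1
   becomes the shorter cycle yk x2 ... yk of the same weight in the exchange graph of
   B0 - x1 + y1. So the weights are quotients d(y)/d(x) of a potential d, the rescaling agrees
   with f on B0 and its neighbours, and, through the Pluecker relation, on all bases by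
   induction on the distance to B0. *)

context comm_group
begin

lemma inv_mult_cancel [simp]: "x \<in> carrier G \<Longrightarrow> y \<in> carrier G \<Longrightarrow> inv x \<otimes> (x \<otimes> y) = y"
  by (simp flip: m_assoc)

lemma mult_inv_cancel [simp]: "x \<in> carrier G \<Longrightarrow> y \<in> carrier G \<Longrightarrow> x \<otimes> (inv x \<otimes> y) = y"
  by (simp flip: m_assoc)

lemma mult_inv_eq_mult_inv_iff:
  "\<lbrakk>x \<in> carrier G; y \<in> carrier G; z \<in> carrier G; w \<in> carrier G\<rbrakk> \<Longrightarrow>
    x \<otimes> inv y = z \<otimes> inv w \<longleftrightarrow> x \<otimes> w = z \<otimes> y"
  by (smt (verit, del_insts) inv_closed m_closed m_comm m_lcomm mult_inv_cancel)

lemma mult_inv_eq_one_iff: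
  "\<lbrakk>x \<in> carrier G; y \<in> carrier G\<rbrakk> \<Longrightarrow> x \<otimes> inv y = \<one> \<longleftrightarrow> x = y"
  using mult_inv_eq_mult_inv_iff[of x y \<one> \<one>] by simp

lemma mult_inv_mult_inv:
  "\<lbrakk>x \<in> carrier G; y \<in> carrier G; z \<in> carrier G; w \<in> carrier G\<rbrakk> \<Longrightarrow>
    (x \<otimes> inv y) \<otimes> (z \<otimes> inv w) = (x \<otimes> z) \<otimes> inv (y \<otimes> w)"
  by (simp add: m_ac inv_mult)

lemma inv_mult_inv: "\<lbrakk>x \<in> carrier G; y \<in> carrier G\<rbrakk> \<Longrightarrow> inv (x \<otimes> inv y) = y \<otimes> inv x"
  by (simp add: inv_mult m_comm)

lemma mult_inv_telescope:
  "\<lbrakk>x \<in> carrier G; y \<in> carrier G; z \<in> carrier G\<rbrakk> \<Longrightarrow> (x \<otimes> inv y) \<otimes> (y \<otimes> inv z) = x \<otimes> inv z"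
  by (simp add: m_assoc)

end

lemma successively_append_Cons_iff:
  "successively P (xs @ u # ys) \<longleftrightarrow> successively P (xs @ [u]) \<and> successively P (u # ys)"
  by (induction xs rule: induct_list012) auto

lemma successively_touching_inner:
  "q \<noteq> [] \<Longrightarrow> successively (\<lambda>a b. a \<in> set q \<or> b \<in> set q) (x # q @ [y])"
proof (induction q arbitrary: x)
  case (Cons c q)
  show ?case
  proof (cases "q = []")
    case False
    have "successively (\<lambda>a b. a \<in> set (c # q) \<or> b \<in> set (c # q)) (c # q @ [y])"
      using Cons.IH[OF False, of c] by (rule successively_mono) auto
    then show ?thesis by simp
  qed simp
qed simp

definition enumeration :: "'a set \<Rightarrow> 'a list" where
  "enumeration S = (SOME xs. distinct xs \<and> set xs = S)"

lemma enumeration_distinct_set: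
  assumes "finite S"
  shows "distinct (enumeration S) \<and> set (enumeration S) = S"
proof -
  have "\<exists>xs. distinct xs \<and> set xs = S"
    using finite_distinct_list[OF assms] by blast
  then show ?thesis
    unfolding enumeration_def by (rule someI_ex)
qed

section \<open>Bases and their exchange graphs\<close>

locale matroid_bases =
  fixes E :: "'e set" and \<B> :: "'e set set" and r :: nat
  assumes matroid_rank: "matroid_rank E \<B> r"
begin

lemma finite_ground: "finite E"
  and bases_nonempty: "\<B> \<noteq> {}"
  and basis_subset: "B \<in> \<B> \<Longrightarrow> B \<subseteq> E"
  and card_basis: "B \<in> \<B> \<Longrightarrow> card B = r"
  and basis_exchange: "\<lbrakk>B1 \<in> \<B>; B2 \<in> \<B>; x \<in> B1 - B2\<rbrakk> \<Longrightarrow> \<exists>y\<in>B2 - B1. insert y (B1 - {x}) \<in> \<B>"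
  using matroid_rank unfolding matroid_rank_def matroid_def by blast+

lemma finite_basis: "B \<in> \<B> \<Longrightarrow> finite B"
  using basis_subset finite_ground finite_subset by blast

lemma card_basis_diff_sym:
  assumes "B \<in> \<B>" "B' \<in> \<B>"
  shows "card (B - B') = card (B' - B)"
  using assms card_basis finite_basis by (metis card_Diff_subset_Int Int_commute finite_Int)

lemma double_exchange:
  assumes "a \<notin> J" "b \<notin> J" "c \<notin> J" "d \<notin> J" "distinct [a, b, c, d]"
    and "J \<union> {a, b} \<in> \<B>" "J \<union> {c, d} \<in> \<B>"
  shows "(J \<union> {a, c} \<in> \<B> \<and> J \<union> {b, d} \<in> \<B>) \<or> (J \<union> {a, d} \<in> \<B> \<and> J \<union> {b, c} \<in> \<B>)"
proof -
  let ?B1 = "J \<union> {a, b}" and ?B2 = "J \<union> {c, d}"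
  have diff: "?B2 - ?B1 = {c, d}" "?B1 - ?B2 = {a, b}"
    using assms by auto
  have ins: "\<And>z. insert z (?B1 - {a}) = J \<union> {b, z}" "\<And>z. insert z (?B1 - {b}) = J \<union> {a, z}"
    "\<And>z. insert z (?B2 - {c}) = J \<union> {d, z}" "\<And>z. insert z (?B2 - {d}) = J \<union> {c, z}"
    using assms by auto
  from basis_exchange[OF assms(6,7), of a] obtain y where "y \<in> {c, d}" "J \<union> {b, y} \<in> \<B>"
    unfolding diff ins by auto
  moreover from basis_exchange[OF assms(6,7), of b] obtain y' where "y' \<in> {c, d}" "J \<union> {a, y'} \<in> \<B>"
    unfolding diff ins by auto
  moreover from basis_exchange[OF assms(7,6), of c] obtain z where "z \<in> {a, b}" "J \<union> {d, z} \<in> \<B>"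
    unfolding diff ins by auto
  moreover from basis_exchange[OF assms(7,6), of d] obtain z' where "z' \<in> {a, b}" "J \<union> {c, z'} \<in> \<B>"
    unfolding diff ins by auto
  moreover have "\<And>x y. J \<union> {x, y} = J \<union> {y, x}" by auto
  ultimately show ?thesis by auto
qed

lemma double_exchange_basis:
  assumes "B \<in> \<B>" "x \<in> B" "x' \<in> B" "x \<noteq> x'" "y \<notin> B" "y' \<notin> B" "y \<noteq> y'"
    and "insert y (B - {x}) \<in> \<B>" "insert y' (B - {x'}) \<in> \<B>"
    and "insert y' (B - {x}) \<notin> \<B> \<or> insert y (B - {x'}) \<notin> \<B>"
  shows "insert y (insert y' (B - {x, x'})) \<in> \<B>"
proof -
  define J where "J = B - {x, x'}"
  have "insert y (B - {x}) = J \<union> {x', y}" "insert y' (B - {x'}) = J \<union> {x, y'}"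
    "insert y' (B - {x}) = J \<union> {x', y'}" "insert y (B - {x'}) = J \<union> {x, y}"
    "insert y (insert y' (B - {x, x'})) = J \<union> {y, y'}"
    using assms(2-7) unfolding J_def by auto
  moreover have "\<And>u v. J \<union> {u, v} = J \<union> {v, u}" by auto
  ultimately show ?thesis
    using double_exchange[of x' J y x y'] assms unfolding J_def by auto
qed

lemma closer_exchange_square:
  assumes B: "B \<in> \<B>" and B0: "B0 \<in> \<B>" and far: "2 \<le> card (B - B0)"
  obtains J a b x y where "B = J \<union> {a, b}" "a \<notin> J" "b \<notin> J" "x \<notin> J" "y \<notin> J" "distinct [a, b, x, y]"
    "J \<union> {x, y} \<in> \<B>" "J \<union> {a, x} \<in> \<B>" "J \<union> {b, y} \<in> \<B>"
    "card (J \<union> {x, y} - B0) < card (B - B0)" "card (J \<union> {a, x} - B0) < card (B - B0)"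
    "card (J \<union> {b, y} - B0) < card (B - B0)"
proof -
  obtain a b where ab: "a \<in> B - B0" "b \<in> B - B0" "a \<noteq> b"
    using far by (auto simp: numeral_eq_Suc card_le_Suc_iff)
  obtain x where x: "x \<in> B0 - B" "insert x (B - {a}) \<in> \<B>"
    using basis_exchange[OF B B0, of a] ab by auto
  obtain y where y: "y \<in> B0 - insert x (B - {a})" "insert y (insert x (B - {a}) - {b}) \<in> \<B>"
    using basis_exchange[OF x(2) B0, of b] ab x by auto
  define J where "J = B - {a, b}"
  have B_eq: "B = J \<union> {a, b}" and notin: "a \<notin> J" "b \<notin> J" "x \<notin> J" "y \<notin> J"
    and dist: "distinct [a, b, x, y]"
    using ab x y unfolding J_def by auto
  have "insert y (insert x (B - {a}) - {b}) = J \<union> {x, y}"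
    using ab x y unfolding J_def by auto
  then have bases: "J \<union> {a, b} \<in> \<B>" "J \<union> {x, y} \<in> \<B>"
    using B B_eq y(2) by auto
  have closer: "card (S - B0) < card (B - B0)" if "S - B0 \<subseteq> B - B0 - {z}" "z \<in> B - B0" for S z
    using finite_basis[OF B] that by (meson card_Diff1_less card_mono finite_Diff le_less_trans)
  have smaller: "J \<union> {x, y} - B0 \<subseteq> B - B0 - {a}"
    "J \<union> {a, x} - B0 \<subseteq> B - B0 - {b}" "J \<union> {a, y} - B0 \<subseteq> B - B0 - {b}"
    "J \<union> {b, y} - B0 \<subseteq> B - B0 - {a}" "J \<union> {b, x} - B0 \<subseteq> B - B0 - {a}"
    using ab x y unfolding J_def by auto
  from double_exchange[OF notin dist bases] show ?thesis
  proof
    assume "J \<union> {a, x} \<in> \<B> \<and> J \<union> {b, y} \<in> \<B>"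
    then show ?thesis
      using that[OF B_eq notin dist] bases closer[OF smaller(1) ab(1)] closer[OF smaller(2) ab(2)]
        closer[OF smaller(4) ab(1)] by blast
  next
    assume "J \<union> {a, y} \<in> \<B> \<and> J \<union> {b, x} \<in> \<B>"
    moreover have "J \<union> {y, x} = J \<union> {x, y}"
      by auto
    ultimately show ?thesis
      using that[of J a b y x] B_eq notin dist bases closer[OF smaller(1) ab(1)] closer[OF smaller(3) ab(2)]
        closer[OF smaller(5) ab(1)] by auto
  qed
qed

definition exchange_adj :: "'e set \<Rightarrow> 'e \<Rightarrow> 'e \<Rightarrow> bool" where
  "exchange_adj B u w \<longleftrightarrow>
     (u \<in> B \<and> w \<notin> B \<and> insert w (B - {u}) \<in> \<B>) \<or> (w \<in> B \<and> u \<notin> B \<and> insert u (B - {w}) \<in> \<B>)"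

lemma exchange_adj_sym: "exchange_adj B u w \<longleftrightarrow> exchange_adj B w u"
  unfolding exchange_adj_def by blast

lemma exchange_adj_mem_iff: "exchange_adj B u w \<Longrightarrow> u \<in> B \<longleftrightarrow> w \<notin> B"
  unfolding exchange_adj_def by blast

definition closed_walk :: "'e set \<Rightarrow> 'e list \<Rightarrow> bool" where
  "closed_walk B p \<longleftrightarrow> successively (exchange_adj B) p \<and> p \<noteq> [] \<and> hd p = last p"

(* In the chord case, bs \<noteq> [] and 2 \<le> length as + length cs say that v and w are not consecutive
   on the cycle. *)
lemma closed_walk_cases:
  assumes "closed_walk B p"
  obtains (repeat) as v bs cs where "p = as @ v # bs @ v # cs" "cs \<noteq> []"
    | (chord) as v bs w cs where "p = as @ v # bs @ w # cs" "exchange_adj B v w" "bs \<noteq> []"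
        "2 \<le> length as + length cs"
    | (short) "distinct (butlast p)" "length p \<le> 5"
    | (chordless) "distinct (butlast p)" "6 \<le> length p"
        "\<And>as v bs w cs. \<lbrakk>p = as @ v # bs @ w # cs; bs \<noteq> []; 2 \<le> length as + length cs\<rbrakk> \<Longrightarrow>
          \<not> exchange_adj B v w"
proof (cases "distinct (butlast p)")
  case False
  then obtain as v bs cs where "butlast p = as @ [v] @ bs @ [v] @ cs"
    using not_distinct_decomp by blast
  moreover have "p = butlast p @ [last p]"
    using assms unfolding closed_walk_def by simp
  ultimately have "p = as @ v # bs @ v # (cs @ [last p])"
    by simp
  then show ?thesis by (rule repeat) simp
next
  case dist: True
  show ?thesis
  proof (cases "\<exists>as v bs w cs. p = as @ v # bs @ w # cs \<and> exchange_adj B v w \<and> bs \<noteq> [] \<and>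
      2 \<le> length as + length cs")
    case True
    then obtain as v bs w cs where "p = as @ v # bs @ w # cs" "exchange_adj B v w" "bs \<noteq> []"
      "2 \<le> length as + length cs"
      by blast
    then show ?thesis by (rule chord)
  next
    case False
    then have no_chord: "\<And>as v bs w cs. \<lbrakk>p = as @ v # bs @ w # cs; bs \<noteq> []; 2 \<le> length as + length cs\<rbrakk> \<Longrightarrow>
        \<not> exchange_adj B v w"
      by blast
    show ?thesis
    proof (cases "length p \<le> 5")
      case True
      then show ?thesis using dist by (rule short[rotated])
    next
      case False
      then show ?thesis using dist no_chord by (intro chordless) auto
    qed
  qed
qed

definition exchange_connected :: "'e set \<Rightarrow> 'e \<Rightarrow> 'e \<Rightarrow> bool" where
  "exchange_connected B u w \<longleftrightarrow>
     (\<exists>p. successively (exchange_adj B) p \<and> p \<noteq> [] \<and> hd p = u \<and> last p = w)"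

lemma exchange_connected_refl: "exchange_connected B u u"
  unfolding exchange_connected_def by (rule exI[of _ "[u]"]) simp

lemma exchange_connected_sym:
  assumes "exchange_connected B u w"
  shows "exchange_connected B w u"
proof -
  obtain p where "successively (exchange_adj B) p" "p \<noteq> []" "hd p = u" "last p = w"
    using assms unfolding exchange_connected_def by blast
  then have "successively (exchange_adj B) (rev p) \<and> rev p \<noteq> [] \<and> hd (rev p) = w \<and> last (rev p) = u"
    by (simp add: successively_rev exchange_adj_sym hd_rev last_rev)
  then show ?thesis
    unfolding exchange_connected_def by blast
qed

lemma exchange_connected_trans:
  assumes "exchange_connected B u v" and "exchange_connected B v w"
  shows "exchange_connected B u w"
proof -
  obtain p q where p: "successively (exchange_adj B) p" "p \<noteq> []" "hd p = u" "last p = v"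
    and q: "successively (exchange_adj B) q" "q \<noteq> []" "hd q = v" "last q = w"
    using assms unfolding exchange_connected_def by blast
  then obtain q' where q': "q = v # q'"
    by (cases q) auto
  have p_split: "butlast p @ [v] = p"
    using p(2,4) append_butlast_last_id[of p] by simp
  then have "successively (exchange_adj B) (butlast p @ q)"
    using p q successively_append_Cons_iff[of _ "butlast p" v q'] unfolding q' by simp
  moreover have "hd (butlast p @ q) = hd (butlast p @ [v])"
    unfolding q' by (cases "butlast p") auto
  then have "butlast p @ q \<noteq> [] \<and> hd (butlast p @ q) = u \<and> last (butlast p @ q) = w"
    using p q p_split by simp
  ultimately show ?thesis
    unfolding exchange_connected_def by blast
qed

lemma exchange_connected_adj: "exchange_adj B u w \<Longrightarrow> exchange_connected B u w"
  unfolding exchange_connected_def by (rule exI[of _ "[u, w]"]) simp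

(* The predicate exchange_connected B u depends on u only through its connected component, so all
   vertices of a component get the same root. *)
definition component_root :: "'e set \<Rightarrow> 'e \<Rightarrow> 'e" where
  "component_root B u = (SOME v. exchange_connected B u v)"

definition root_path :: "'e set \<Rightarrow> 'e \<Rightarrow> 'e list" where
  "root_path B u =
     (SOME p. successively (exchange_adj B) p \<and> p \<noteq> [] \<and> hd p = component_root B u \<and> last p = u)"

lemma root_path_walk:
  "successively (exchange_adj B) (root_path B u) \<and> root_path B u \<noteq> [] \<and>
    hd (root_path B u) = component_root B u \<and> last (root_path B u) = u"
proof -
  have "exchange_connected B u (component_root B u)"
    unfolding component_root_def using exchange_connected_refl by (rule someI)
  then have "exchange_connected B (component_root B u) u"
    by (rule exchange_connected_sym)
  then show ?thesis
    unfolding root_path_def exchange_connected_def by (rule someI_ex)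
qed

lemma component_root_adj:
  assumes "exchange_adj B u w"
  shows "component_root B u = component_root B w"
proof -
  have "exchange_connected B u = exchange_connected B w"
    using assms exchange_connected_adj exchange_connected_sym exchange_connected_trans by (intro ext) blast
  then show ?thesis
    unfolding component_root_def by simp
qed

end

section \<open>Multiplicative Pluecker functions on bases\<close>

locale plucker_function = comm_group G + matroid_bases E \<B> r
  for G (structure) and E :: "'e set" and \<B> r +
  fixes f :: "'e set \<Rightarrow> 'a"
  assumes f_closed [simp]: "f S \<in> carrier G"
    and plucker: "\<lbrakk>a \<notin> J; b \<notin> J; c \<notin> J; d \<notin> J; distinct [a, b, c, d];
      J \<union> {a, b} \<in> \<B>; J \<union> {c, d} \<in> \<B>; J \<union> {a, c} \<in> \<B>; J \<union> {b, d} \<in> \<B>\<rbrakk> \<Longrightarrow>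
      f (J \<union> {a, b}) \<otimes> f (J \<union> {c, d}) = f (J \<union> {a, c}) \<otimes> f (J \<union> {b, d})"
begin

lemma double_exchange_plucker:
  assumes "B \<in> \<B>" "x \<in> B" "x' \<in> B" "x \<noteq> x'" "y \<notin> B" "y' \<notin> B" "y \<noteq> y'"
    and "insert y (B - {x}) \<in> \<B>" "insert y' (B - {x'}) \<in> \<B>"
    and "insert y' (B - {x}) \<notin> \<B> \<or> insert y (B - {x'}) \<notin> \<B>"
  shows "f B \<otimes> f (insert y (insert y' (B - {x, x'}))) = f (insert y (B - {x})) \<otimes> f (insert y' (B - {x'}))"
proof -
  define J where "J = B - {x, x'}"
  have sets: "B = J \<union> {x, x'}" "insert y (B - {x}) = J \<union> {x', y}" "insert y' (B - {x'}) = J \<union> {x, y'}"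
    "insert y (insert y' (B - {x, x'})) = J \<union> {y', y}"
    using assms(2-7) unfolding J_def by auto
  have "x \<notin> J" "x' \<notin> J" "y' \<notin> J" "y \<notin> J" "distinct [x, x', y', y]"
    using assms(2-7) unfolding J_def by auto
  moreover have "J \<union> {x, x'} \<in> \<B>" "J \<union> {y', y} \<in> \<B>" "J \<union> {x, y'} \<in> \<B>" "J \<union> {x', y} \<in> \<B>"
    using assms(1,8,9) double_exchange_basis[OF assms] unfolding sets[symmetric] by blast+
  ultimately have "f (J \<union> {x, x'}) \<otimes> f (J \<union> {y', y}) = f (J \<union> {x, y'}) \<otimes> f (J \<union> {x', y})"
    by (rule plucker)
  then show ?thesis
    unfolding sets(2-4) sets(1)[symmetric] by (simp add: m_comm)
qed

definition exchange_weight :: "'e set \<Rightarrow> 'e \<Rightarrow> 'e \<Rightarrow> 'a" where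
  "exchange_weight B u w =
     (if u \<in> B then f (insert w (B - {u})) \<otimes> inv (f B) else f B \<otimes> inv (f (insert u (B - {w}))))"

fun walk_weight :: "'e set \<Rightarrow> 'e list \<Rightarrow> 'a" where
  "walk_weight B (u # w # p) = exchange_weight B u w \<otimes> walk_weight B (w # p)"
| "walk_weight B _ = \<one>"

lemma exchange_weight_closed [simp]: "exchange_weight B u w \<in> carrier G"
  unfolding exchange_weight_def by simp

lemma walk_weight_closed [simp]: "walk_weight B p \<in> carrier G"
  by (induction B p rule: walk_weight.induct) auto

lemma exchange_weight_swap: "exchange_adj B u w \<Longrightarrow> exchange_weight B w u = inv (exchange_weight B u w)"
  unfolding exchange_adj_def exchange_weight_def by (auto simp: inv_mult_inv)

lemma exchange_weight_back_forth: "exchange_adj B u w \<Longrightarrow> exchange_weight B u w \<otimes> exchange_weight B w u = \<one>"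
  by (simp add: exchange_weight_swap)

lemma walk_weight_append: "walk_weight B (p @ u # q) = walk_weight B (p @ [u]) \<otimes> walk_weight B (u # q)"
proof (induction p)
  case (Cons a p)
  then show ?case by (cases p) (auto simp: m_assoc)
qed simp

lemma walk_weight_append_nonempty:
  "\<lbrakk>p \<noteq> []; q \<noteq> []\<rbrakk> \<Longrightarrow>
    walk_weight B (p @ q) = walk_weight B p \<otimes> (exchange_weight B (last p) (hd q) \<otimes> walk_weight B q)"
proof (induction p rule: rev_induct)
  case (snoc x p)
  then show ?case
    using walk_weight_append[of B p x q] by (cases q) auto
qed simp

lemma walk_weight_rev: "successively (exchange_adj B) p \<Longrightarrow> walk_weight B (rev p) = inv (walk_weight B p)"
proof (induction B p rule: walk_weight.induct)
  case (1 B u w p)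
  have "walk_weight B (rev (u # w # p)) = walk_weight B (rev p @ [w]) \<otimes> exchange_weight B w u"
    using walk_weight_append[of B "rev p" w "[u]"] by simp
  also have "\<dots> = inv (walk_weight B (w # p)) \<otimes> inv (exchange_weight B u w)"
    using 1 exchange_weight_swap by simp
  finally show ?case by (simp add: inv_mult m_comm)
qed auto

lemma closed_walk_rotate:
  assumes "closed_walk B (u # w # p)"
  shows "closed_walk B (w # p @ [w]) \<and> walk_weight B (w # p @ [w]) = walk_weight B (u # w # p)"
proof -
  have walk: "exchange_adj B u w" "successively (exchange_adj B) (w # p)" and last: "last (w # p) = u"
    using assms unfolding closed_walk_def by auto
  then have "successively (exchange_adj B) ((w # p) @ [w])"
    unfolding successively_append_iff by (simp add: exchange_adj_sym)
  moreover have "walk_weight B ((w # p) @ [w]) = walk_weight B (w # p) \<otimes> exchange_weight B u w"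
    using walk_weight_append_nonempty[of "w # p" "[w]" B] last by simp
  ultimately show ?thesis
    unfolding closed_walk_def by (simp add: m_comm)
qed

lemma closed_walk_split_at_repeat:
  assumes "closed_walk B (as @ v # bs @ v # cs)"
  shows "closed_walk B (v # bs @ [v]) \<and> closed_walk B (as @ v # cs) \<and>
    walk_weight B (as @ v # bs @ v # cs) = walk_weight B (v # bs @ [v]) \<otimes> walk_weight B (as @ v # cs)"
proof -
  have "walk_weight B (as @ v # bs @ v # cs) =
      walk_weight B (as @ [v]) \<otimes> (walk_weight B (v # bs @ [v]) \<otimes> walk_weight B (v # cs))"
    using walk_weight_append[of B as v "bs @ v # cs"] walk_weight_append[of B "v # bs" v cs] by simp
  moreover have "walk_weight B (as @ v # cs) = walk_weight B (as @ [v]) \<otimes> walk_weight B (v # cs)"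
    by (rule walk_weight_append)
  moreover have "hd (as @ v # cs) = last (as @ v # cs)"
    using assms unfolding closed_walk_def by (cases as; cases cs rule: rev_cases) auto
  moreover have "successively (exchange_adj B) (v # bs @ [v]) \<and> successively (exchange_adj B) (as @ v # cs)"
    using assms successively_append_Cons_iff[of _ as v "bs @ v # cs"]
      successively_append_Cons_iff[of _ "v # bs" v cs] successively_append_Cons_iff[of _ as v cs]
    unfolding closed_walk_def by auto
  ultimately show ?thesis
    unfolding closed_walk_def by (auto simp: m_lcomm)
qed

lemma closed_walk_split_at_chord:
  assumes "closed_walk B (as @ v # bs @ w # cs)" and "exchange_adj B v w"
  shows "closed_walk B (v # bs @ [w, v]) \<and> closed_walk B (as @ v # w # cs) \<and>
    walk_weight B (as @ v # bs @ w # cs) = walk_weight B (v # bs @ [w, v]) \<otimes> walk_weight B (as @ v # w # cs)"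
proof -
  let ?wvw = "exchange_weight B v w \<otimes> exchange_weight B w v"
  have "walk_weight B (v # bs @ [w, v]) \<otimes> walk_weight B (as @ v # w # cs) =
      (walk_weight B (as @ [v]) \<otimes> (walk_weight B (v # bs @ [w]) \<otimes> walk_weight B (w # cs))) \<otimes> ?wvw"
    using walk_weight_append[of B "v # bs" w "[v]"] walk_weight_append[of B as v "w # cs"]
    by (simp add: m_ac)
  also have "\<dots> = walk_weight B (as @ v # bs @ w # cs)"
    using walk_weight_append[of B as v "bs @ w # cs"] walk_weight_append[of B "v # bs" w cs]
      exchange_weight_back_forth[OF assms(2)] by simp
  finally have "walk_weight B (as @ v # bs @ w # cs) = walk_weight B (v # bs @ [w, v]) \<otimes> walk_weight B (as @ v # w # cs)" ..
  moreover have "hd (as @ v # w # cs) = last (as @ v # w # cs)"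
    using assms unfolding closed_walk_def by (cases as; cases cs rule: rev_cases) auto
  moreover have "successively (exchange_adj B) (v # bs @ [w, v]) \<and> successively (exchange_adj B) (as @ v # w # cs)"
    using assms successively_append_Cons_iff[of _ as v "bs @ w # cs"]
      successively_append_Cons_iff[of _ "v # bs" w cs] successively_append_Cons_iff[of _ "v # bs" w "[v]"]
      successively_append_Cons_iff[of _ as v "w # cs"]
    unfolding closed_walk_def by (auto simp: exchange_adj_sym)
  ultimately show ?thesis
    unfolding closed_walk_def by auto
qed

lemma pivot_transfer_edge:
  assumes B: "B \<in> \<B>" and x1: "x1 \<in> B" and pivot: "exchange_adj B x1 y1"
    and edge: "exchange_adj B a b" and "a \<notin> {x1, y1}" "b \<notin> {x1, y1}"
    and far: "\<exists>z\<in>{a, b}. \<not> exchange_adj B x1 z \<and> \<not> exchange_adj B z y1"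
  shows "exchange_adj (insert y1 (B - {x1})) a b \<and>
    exchange_weight (insert y1 (B - {x1})) a b = exchange_weight B a b"
proof -
  let ?B1 = "insert y1 (B - {x1})"
  have y1: "y1 \<notin> B" "?B1 \<in> \<B>"
    using pivot x1 unfolding exchange_adj_def by auto
  have from_basis: "exchange_adj ?B1 a b \<and> exchange_weight ?B1 a b = exchange_weight B a b"
    if a: "a \<in> B" and edge: "exchange_adj B a b" and "a \<notin> {x1, y1}" "b \<notin> {x1, y1}"
      and "\<exists>z\<in>{a, b}. \<not> exchange_adj B x1 z \<and> \<not> exchange_adj B z y1" for a b
  proof -
    have b: "b \<notin> B" "insert b (B - {a}) \<in> \<B>"
      using edge a unfolding exchange_adj_def by auto
    have "insert y1 (B - {a}) \<notin> \<B> \<or> insert b (B - {x1}) \<notin> \<B>"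
      using that x1 y1 b unfolding exchange_adj_def by auto
    note hyps = B a x1 _ b(1) y1(1) _ b(2) y1(2) this
    have B1': "insert b (?B1 - {a}) = insert b (insert y1 (B - {a, x1}))"
      using that by auto
    have "exchange_adj ?B1 a b"
      using double_exchange_basis[OF hyps] that b y1 unfolding exchange_adj_def B1' by auto
    moreover have "f B \<otimes> f (insert b (?B1 - {a})) = f (insert b (B - {a})) \<otimes> f ?B1"
      using double_exchange_plucker[OF hyps] that unfolding B1' by auto
    then have "f (insert b (?B1 - {a})) \<otimes> inv (f ?B1) = f (insert b (B - {a})) \<otimes> inv (f B)"
      by (subst mult_inv_eq_mult_inv_iff) (simp_all add: m_comm)
    then have "exchange_weight ?B1 a b = exchange_weight B a b"
      using that unfolding exchange_weight_def by simp
    ultimately show ?thesis ..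
  qed
  show ?thesis
  proof (cases "a \<in> B")
    case True
    then show ?thesis using from_basis assms by blast
  next
    case False
    then have "exchange_adj ?B1 b a \<and> exchange_weight ?B1 b a = exchange_weight B b a"
      using from_basis[of b a] assms exchange_adj_sym exchange_adj_mem_iff by blast
    then show ?thesis
      using edge exchange_adj_sym exchange_weight_swap by metis
  qed
qed

lemma pivot_transfer_walk:
  assumes B: "B \<in> \<B>" and x1: "x1 \<in> B" and pivot: "exchange_adj B x1 y1"
    and far: "\<forall>z\<in>Z. \<not> exchange_adj B x1 z \<and> \<not> exchange_adj B z y1"
  shows "\<lbrakk>successively (exchange_adj B) m; set m \<inter> {x1, y1} = {};
      successively (\<lambda>a b. a \<in> Z \<or> b \<in> Z) m\<rbrakk> \<Longrightarrow>
    successively (exchange_adj (insert y1 (B - {x1}))) m \<and>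
    walk_weight (insert y1 (B - {x1})) m = walk_weight B m"
proof (induction m rule: induct_list012)
  case (3 u w p)
  then show ?case
    using pivot_transfer_edge[OF B x1 pivot, of u w] far by auto
qed auto

lemma pivot_new_edge:
  assumes B: "B \<in> \<B>" and "x1 \<in> B" "x1 \<noteq> x2" "y1 \<noteq> yk"
    and "exchange_adj B x1 y1" "exchange_adj B y1 x2" "exchange_adj B yk x1" "\<not> exchange_adj B x2 yk"
  shows "exchange_adj (insert y1 (B - {x1})) yk x2 \<and>
    exchange_weight (insert y1 (B - {x1})) yk x2 =
      exchange_weight B x1 y1 \<otimes> exchange_weight B y1 x2 \<otimes> exchange_weight B yk x1"
proof -
  let ?B1 = "insert y1 (B - {x1})" and ?D = "insert y1 (insert yk (B - {x2, x1}))"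
  let ?F2 = "f (insert y1 (B - {x2}))" and ?Fk = "f (insert yk (B - {x1}))"
  have mem: "x2 \<in> B" "y1 \<notin> B" "yk \<notin> B"
    using assms exchange_adj_mem_iff by blast+
  have hyps: "x2 \<in> B" "x1 \<in> B" "x2 \<noteq> x1" "y1 \<notin> B" "yk \<notin> B" "y1 \<noteq> yk"
    "insert y1 (B - {x2}) \<in> \<B>" "insert yk (B - {x1}) \<in> \<B>" "insert yk (B - {x2}) \<notin> \<B> \<or> insert y1 (B - {x1}) \<notin> \<B>"
    using assms mem unfolding exchange_adj_def by auto
  have D: "insert yk (?B1 - {x2}) = ?D"
    using assms mem by auto
  have adj: "exchange_adj ?B1 yk x2"
    using double_exchange_basis[OF B hyps] assms mem unfolding exchange_adj_def D by auto
  have "exchange_weight ?B1 yk x2 = f ?B1 \<otimes> inv (f ?D)"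
    using mem assms unfolding exchange_weight_def D by auto
  also have "\<dots> = (f ?B1 \<otimes> f B) \<otimes> inv (?F2 \<otimes> ?Fk)"
    using double_exchange_plucker[OF B hyps] by (subst mult_inv_eq_mult_inv_iff) (simp_all add: m_assoc)
  also have "\<dots> = (f ?B1 \<otimes> inv (f B)) \<otimes> (f B \<otimes> inv ?F2) \<otimes> (f B \<otimes> inv ?Fk)"
    by (simp add: mult_inv_telescope mult_inv_mult_inv)
  also have "\<dots> = exchange_weight B x1 y1 \<otimes> exchange_weight B y1 x2 \<otimes> exchange_weight B yk x1"
    using assms mem unfolding exchange_weight_def by auto
  finally show ?thesis
    using adj by blast
qed

lemma pivot_closed_walk:
  assumes B: "B \<in> \<B>" and x1: "x1 \<in> B"
    and walk: "successively (exchange_adj B) (x1 # y1 # x2 # q @ [yk, x1])"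
    and dist: "distinct (x1 # y1 # x2 # q @ [yk])" and q: "q \<noteq> []"
    and no_chord: "\<not> exchange_adj B x2 yk" "\<forall>z\<in>set q. \<not> exchange_adj B x1 z \<and> \<not> exchange_adj B y1 z"
  shows "insert y1 (B - {x1}) \<in> \<B> \<and> closed_walk (insert y1 (B - {x1})) (yk # x2 # q @ [yk]) \<and>
    walk_weight (insert y1 (B - {x1})) (yk # x2 # q @ [yk]) = walk_weight B (x1 # y1 # x2 # q @ [yk, x1])"
proof -
  let ?B1 = "insert y1 (B - {x1})"
  have edges: "exchange_adj B x1 y1" "exchange_adj B y1 x2" "exchange_adj B yk x1"
    and middle: "successively (exchange_adj B) (x2 # q @ [yk])"
    using walk successively_append_Cons_iff[of _ "x2 # q" yk "[x1]"] by auto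
  have "insert y1 (B - {x1}) \<in> \<B>"
    using edges(1) x1 unfolding exchange_adj_def by auto
  moreover have "successively (exchange_adj ?B1) (x2 # q @ [yk]) \<and>
      walk_weight ?B1 (x2 # q @ [yk]) = walk_weight B (x2 # q @ [yk])"
    using pivot_transfer_walk[OF B x1 edges(1), of "set q" "x2 # q @ [yk]"] middle dist no_chord(2)
      successively_touching_inner[OF q] exchange_adj_sym by auto
  moreover have "exchange_adj ?B1 yk x2 \<and> exchange_weight ?B1 yk x2 =
      exchange_weight B x1 y1 \<otimes> exchange_weight B y1 x2 \<otimes> exchange_weight B yk x1"
    using pivot_new_edge[OF B x1 _ _ edges no_chord(1)] dist by auto
  moreover have "walk_weight B (x1 # y1 # x2 # q @ [yk, x1]) =
      exchange_weight B x1 y1 \<otimes> (exchange_weight B y1 x2 \<otimes>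
        (walk_weight B (x2 # q @ [yk]) \<otimes> exchange_weight B yk x1))"
    using walk_weight_append[of B "x2 # q" yk "[x1]"] by simp
  ultimately show ?thesis
    unfolding closed_walk_def by (simp add: m_ac)
qed

lemma square_walk_weight:
  assumes B: "B \<in> \<B>" and u: "u \<in> B" and walk: "closed_walk B [u, a, b, c, u]" and dist: "distinct [u, a, b, c]"
  shows "walk_weight B [u, a, b, c, u] = \<one>"
proof -
  define J where "J = B - {u, b}"
  have adj: "exchange_adj B u a" "exchange_adj B a b" "exchange_adj B b c" "exchange_adj B c u"
    using walk unfolding closed_walk_def by auto
  then have mem: "a \<notin> B" "b \<in> B" "c \<notin> B"
    using u exchange_adj_mem_iff by blast+
  have sets: "insert a (B - {u}) = J \<union> {b, a}" "insert c (B - {b}) = J \<union> {c, u}"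
    "insert c (B - {u}) = J \<union> {b, c}" "insert a (B - {b}) = J \<union> {a, u}"
    using u mem dist unfolding J_def by auto
  have "b \<notin> J" "a \<notin> J" "c \<notin> J" "u \<notin> J" "distinct [b, a, c, u]"
    using dist mem unfolding J_def by auto
  moreover have "J \<union> {b, a} \<in> \<B>" "J \<union> {c, u} \<in> \<B>" "J \<union> {b, c} \<in> \<B>" "J \<union> {a, u} \<in> \<B>"
    using adj u mem unfolding exchange_adj_def sets[symmetric] by auto
  ultimately have "f (J \<union> {b, a}) \<otimes> f (J \<union> {c, u}) = f (J \<union> {b, c}) \<otimes> f (J \<union> {a, u})"
    by (rule plucker)
  then have rel: "f (insert a (B - {u})) \<otimes> f (insert c (B - {b})) = f (insert a (B - {b})) \<otimes> f (insert c (B - {u}))"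
    unfolding sets by (simp add: m_comm)
  have "walk_weight B [u, a, b, c, u] =
      (exchange_weight B u a \<otimes> exchange_weight B a b) \<otimes> (exchange_weight B b c \<otimes> exchange_weight B c u)"
    by (simp add: m_assoc)
  also have "\<dots> = (f (insert a (B - {u})) \<otimes> inv (f (insert a (B - {b})))) \<otimes>
      (f (insert c (B - {b})) \<otimes> inv (f (insert c (B - {u}))))"
    using u mem unfolding exchange_weight_def by (simp add: mult_inv_telescope)
  also have "\<dots> = \<one>"
    using rel by (simp add: mult_inv_mult_inv mult_inv_eq_one_iff)
  finally show ?thesis .
qed

lemma short_closed_walk_weight:
  assumes B: "B \<in> \<B>" and walk: "closed_walk B p" and dist: "distinct (butlast p)"
    and hd: "hd p \<in> B" and short: "length p \<le> 5"
  shows "walk_weight B p = \<one>"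
proof -
  have p: "p \<noteq> []" "hd p = last p" "successively (exchange_adj B) p"
    using walk unfolding closed_walk_def by auto
  have "length p \<in> {1, 2, 3, 4, 5}"
    using p(1) short by (auto simp flip: length_greater_0_conv)
  then consider "length p = 1" | "length p = 2" | "length p = 3" | "length p = 4" | "length p = 5"
    by blast
  then show ?thesis
  proof cases
    case 1
    then show ?thesis by (auto simp: length_Suc_conv)
  next
    case 2
    then obtain u a where "p = [u, a]" by (auto simp: length_Suc_conv numeral_eq_Suc)
    then show ?thesis using p exchange_adj_mem_iff[of B u a] by auto
  next
    case 3
    then obtain u a b where "p = [u, a, b]" by (auto simp: length_Suc_conv numeral_eq_Suc)
    then show ?thesis using p exchange_weight_back_forth by auto
  next
    case 4
    then obtain u a b c where "p = [u, a, b, c]" by (auto simp: length_Suc_conv numeral_eq_Suc)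
    then show ?thesis
      using p hd exchange_adj_mem_iff[of B u a] exchange_adj_mem_iff[of B a b] exchange_adj_mem_iff[of B b c]
      by auto
  next
    case 5
    then obtain u a b c d where "p = [u, a, b, c, d]" by (auto simp: length_Suc_conv numeral_eq_Suc)
    then show ?thesis using square_walk_weight[OF B, of u a b c] walk dist p hd by auto
  qed
qed

lemma chordless_closed_walk_pivot:
  assumes B: "B \<in> \<B>" and walk: "closed_walk B p" and dist: "distinct (butlast p)"
    and hd: "hd p \<in> B" and long: "6 \<le> length p"
    and chordless: "\<And>as v bs w cs. \<lbrakk>p = as @ v # bs @ w # cs; bs \<noteq> []; 2 \<le> length as + length cs\<rbrakk> \<Longrightarrow>
      \<not> exchange_adj B v w"
  obtains B' p' where "B' \<in> \<B>" "closed_walk B' p'" "length p' < length p" "walk_weight B' p' = walk_weight B p"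
proof -
  obtain x1 y1 x2 rest where p0: "p = x1 # y1 # x2 # rest" and rest: "3 \<le> length rest"
    using long by (auto simp: numeral_eq_Suc Suc_le_length_iff)
  moreover have "last rest = x1"
    using walk rest unfolding closed_walk_def p0 by auto
  ultimately have "\<exists>q yk. rest = q @ [yk, x1] \<and> q \<noteq> []"
    by (cases rest rule: rev_cases; cases "butlast rest" rule: rev_cases)
      (auto simp: numeral_eq_Suc Suc_le_length_iff)
  then obtain q yk where p: "p = x1 # y1 # x2 # q @ [yk, x1]" and q: "q \<noteq> []"
    using p0 by blast
  have no_chord: "\<not> exchange_adj B x2 yk" "\<forall>z\<in>set q. \<not> exchange_adj B x1 z \<and> \<not> exchange_adj B y1 z"
  proof -
    show "\<not> exchange_adj B x2 yk"
      using chordless[of "[x1, y1]" x2 q yk "[x1]"] p q by simp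
    show "\<forall>z\<in>set q. \<not> exchange_adj B x1 z \<and> \<not> exchange_adj B y1 z"
    proof
      fix z assume "z \<in> set q"
      then obtain q1 q2 where "q = q1 @ z # q2"
        by (meson split_list)
      then show "\<not> exchange_adj B x1 z \<and> \<not> exchange_adj B y1 z"
        using chordless[of "[]" x1 "y1 # x2 # q1" z "q2 @ [yk, x1]"]
          chordless[of "[x1]" y1 "x2 # q1" z "q2 @ [yk, x1]"] p by simp
    qed
  qed
  have "distinct (x1 # y1 # x2 # q @ [yk])"
    using dist unfolding p by (simp add: butlast_append)
  then have "insert y1 (B - {x1}) \<in> \<B> \<and> closed_walk (insert y1 (B - {x1})) (yk # x2 # q @ [yk]) \<and>
    walk_weight (insert y1 (B - {x1})) (yk # x2 # q @ [yk]) = walk_weight B p"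
    using pivot_closed_walk[OF B _ _ _ q no_chord] walk hd unfolding closed_walk_def p by simp
  moreover have "length (yk # x2 # q @ [yk]) < length p"
    using p by simp
  ultimately show ?thesis
    using that by blast
qed

lemma closed_walk_start_in_basis:
  assumes "closed_walk B p" and "2 \<le> length p"
  obtains p' where "closed_walk B p'" "length p' = length p" "hd p' \<in> B" "walk_weight B p' = walk_weight B p"
proof -
  obtain u w p0 where p: "p = u # w # p0"
    using assms(2) by (cases p; cases "tl p") auto
  show ?thesis
  proof (cases "u \<in> B")
    case True
    then show ?thesis using that[of p] assms(1) p by simp
  next
    case False
    then have "w \<in> B"
      using assms(1) exchange_adj_mem_iff[of B u w] unfolding p closed_walk_def by auto
    then show ?thesis
      using that[of "w # p0 @ [w]"] closed_walk_rotate[of B u w p0] assms(1) unfolding p by simp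
  qed
qed

theorem closed_walk_weight:
  assumes "B \<in> \<B>" and "closed_walk B p"
  shows "walk_weight B p = \<one>"
  using assms
proof (induction "length p" arbitrary: B p rule: less_induct)
  case less
  note IH = less.hyps[rule_format]
  show ?case
  proof (cases "length p < 2")
    case True
    then show ?thesis using less.prems unfolding closed_walk_def by (cases p) auto
  next
    case False
    obtain p' where walk: "closed_walk B p'" and len: "length p' = length p" and hd: "hd p' \<in> B"
      and weight: "walk_weight B p' = walk_weight B p"
      by (rule closed_walk_start_in_basis[OF less.prems(2)]) (use False in simp)
    from walk show ?thesis
    proof (cases rule: closed_walk_cases)
      case (repeat as v bs cs)
      have split: "closed_walk B (v # bs @ [v])" "closed_walk B (as @ v # cs)"
        "walk_weight B p' = walk_weight B (v # bs @ [v]) \<otimes> walk_weight B (as @ v # cs)"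
        using closed_walk_split_at_repeat[of B as v bs cs] walk unfolding repeat(1) by auto
      have "walk_weight B (v # bs @ [v]) = \<one>" "walk_weight B (as @ v # cs) = \<one>"
        using IH[OF _ less.prems(1) split(1)] IH[OF _ less.prems(1) split(2)] len repeat(2)
        unfolding repeat(1) by (simp_all flip: length_greater_0_conv)
      then show ?thesis using split(3) weight by simp
    next
      case (chord as v bs w cs)
      have split: "closed_walk B (v # bs @ [w, v])" "closed_walk B (as @ v # w # cs)"
        "walk_weight B p' = walk_weight B (v # bs @ [w, v]) \<otimes> walk_weight B (as @ v # w # cs)"
        using closed_walk_split_at_chord[of B as v bs w cs] walk chord(2) unfolding chord(1) by auto
      have "walk_weight B (v # bs @ [w, v]) = \<one>" "walk_weight B (as @ v # w # cs) = \<one>"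
        using IH[OF _ less.prems(1) split(1)] IH[OF _ less.prems(1) split(2)] len chord(3,4)
        unfolding chord(1) by (simp_all flip: length_greater_0_conv)
      then show ?thesis using split(3) weight by simp
    next
      case short
      then show ?thesis
        using short_closed_walk_weight[OF less.prems(1) walk short(1) hd short(2)] weight by simp
    next
      case chordless
      obtain B' p'' where "B' \<in> \<B>" "closed_walk B' p''" "length p'' < length p'"
        "walk_weight B' p'' = walk_weight B p'"
        by (rule chordless_closed_walk_pivot[OF less.prems(1) walk chordless(1) hd chordless(2,3)])
      then show ?thesis using IH[of p'' B'] len weight by simp
    qed
  qed
qed

definition potential :: "'e set \<Rightarrow> 'e \<Rightarrow> 'a" where
  "potential B u = walk_weight B (root_path B u)"

lemma potential_closed [simp]: "potential B u \<in> carrier G"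
  unfolding potential_def by simp

lemma potential_adj:
  assumes B: "B \<in> \<B>" and adj: "exchange_adj B x y"
  shows "potential B y = potential B x \<otimes> exchange_weight B x y"
proof -
  let ?px = "root_path B x" and ?py = "root_path B y"
  have px: "successively (exchange_adj B) ?px" "?px \<noteq> []" "last ?px = x"
    and py: "successively (exchange_adj B) ?py" "?py \<noteq> []" "last ?py = y"
    using root_path_walk by blast+
  have "successively (exchange_adj B) (rev ?py)"
    using py(1) by (simp add: successively_rev exchange_adj_sym)
  then have "successively (exchange_adj B) (?px @ rev ?py)"
    using px py adj by (simp add: successively_append_iff hd_rev)
  moreover have "hd (?px @ rev ?py) = last (?px @ rev ?py)"
    using px py root_path_walk[of B x] root_path_walk[of B y] component_root_adj[OF adj] by (simp add: last_rev)
  ultimately have "closed_walk B (?px @ rev ?py)"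
    unfolding closed_walk_def using px(2) by simp
  then have "walk_weight B (?px @ rev ?py) = \<one>"
    by (rule closed_walk_weight[OF B])
  moreover have "walk_weight B (?px @ rev ?py) =
      potential B x \<otimes> (exchange_weight B x y \<otimes> inv (potential B y))"
    using walk_weight_append_nonempty[of ?px "rev ?py" B] px py walk_weight_rev[OF py(1)]
    unfolding potential_def by (simp add: hd_rev)
  ultimately have "(potential B x \<otimes> exchange_weight B x y) \<otimes> inv (potential B y) = \<one>"
    by (simp add: m_assoc)
  then show ?thesis
    by (simp add: mult_inv_eq_one_iff)
qed

lemma rescaling_fourth_corner:
  assumes c: "c \<in> carrier G" and d: "d \<in> E \<rightarrow> carrier G"
    and notin: "a \<notin> J" "b \<notin> J" "x \<notin> J" "y \<notin> J" and dist: "distinct [a, b, x, y]"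
    and bases: "J \<union> {a, b} \<in> \<B>" "J \<union> {x, y} \<in> \<B>" "J \<union> {a, x} \<in> \<B>" "J \<union> {b, y} \<in> \<B>"
    and scaled: "f (J \<union> {x, y}) = c \<otimes> finprod G d (J \<union> {x, y})"
      "f (J \<union> {a, x}) = c \<otimes> finprod G d (J \<union> {a, x})"
      "f (J \<union> {b, y}) = c \<otimes> finprod G d (J \<union> {b, y})"
  shows "f (J \<union> {a, b}) = c \<otimes> finprod G d (J \<union> {a, b})"
proof -
  have J: "finite J" "J \<subseteq> E" and elems: "a \<in> E" "b \<in> E" "x \<in> E" "y \<in> E"
    using basis_subset[OF bases(1)] basis_subset[OF bases(2)] finite_ground finite_subset by auto
  have prod: "finprod G d (J \<union> {u, v}) = d u \<otimes> (d v \<otimes> finprod G d J)"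
    if "u \<in> E" "v \<in> E" "u \<notin> J" "v \<notin> J" "u \<noteq> v" for u v
    using that J d by (simp add: finprod_insert subset_eq Pi_iff)
  have "f (J \<union> {a, b}) \<otimes> f (J \<union> {x, y}) = f (J \<union> {a, x}) \<otimes> f (J \<union> {b, y})"
    by (rule plucker[OF notin dist bases])
  then have "f (J \<union> {a, b}) \<otimes> (c \<otimes> finprod G d (J \<union> {x, y})) =
      (c \<otimes> finprod G d (J \<union> {a, b})) \<otimes> (c \<otimes> finprod G d (J \<union> {x, y}))"
    using c d elems notin dist J unfolding scaled prod[OF elems(1,2) notin(1,2)]
      prod[OF elems(3,4) notin(3,4)] prod[OF elems(1,3) notin(1,3)] prod[OF elems(2,4) notin(2,4)]
    by (simp add: m_ac Pi_iff subset_eq)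
  moreover have "finprod G d S \<in> carrier G" if "S \<subseteq> E" for S
    using d that by (auto intro: finprod_closed)
  ultimately show ?thesis
    using c J elems by simp
qed

lemma rescaling_near_basis:
  assumes B0: "B0 \<in> \<B>" and B: "B \<in> \<B>" and near: "card (B - B0) \<le> 1"
  shows "f B = (f B0 \<otimes> inv (finprod G (potential B0) B0)) \<otimes> finprod G (potential B0) B"
proof -
  let ?d = "potential B0"
  have prod_closed: "finprod G ?d S \<in> carrier G" for S
    by (rule finprod_closed) simp
  show ?thesis
  proof (cases "card (B - B0) = 0")
    case True
    then have "B = B0"
      using B B0 card_basis_diff_sym finite_basis by (metis Diff_eq_empty_iff card_0_eq finite_Diff subset_antisym)
    then show ?thesis
      using prod_closed by (simp add: m_assoc)
  next
    case False
    then obtain y where y: "B - B0 = {y}"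
      using near by (auto simp: card_1_singleton_iff le_Suc_eq)
    moreover obtain x where x: "B0 - B = {x}"
      using near False card_basis_diff_sym[OF B B0] by (auto simp: card_1_singleton_iff le_Suc_eq)
    ultimately have B_eq: "B = insert y (B0 - {x})" and xy: "x \<in> B0" "y \<notin> B0"
      by auto
    then have "exchange_adj B0 x y"
      using B unfolding exchange_adj_def by auto
    then have dy: "?d y = ?d x \<otimes> (f B \<otimes> inv (f B0))"
      using potential_adj[OF B0] xy B_eq unfolding exchange_weight_def by simp
    define Q where "Q = ?d x \<otimes> finprod G ?d (B0 - {x})"
    have Q: "Q \<in> carrier G"
      unfolding Q_def using prod_closed by simp
    have "finprod G ?d B0 = Q"
      using finprod_insert[of "B0 - {x}" x ?d] finite_basis[OF B0] xy
      unfolding Q_def by (simp add: insert_absorb)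
    moreover have "finprod G ?d B = Q \<otimes> (f B \<otimes> inv (f B0))"
      using finprod_insert[of "B0 - {x}" y ?d] finite_basis[OF B0] xy prod_closed
      unfolding Q_def B_eq dy by (simp add: m_ac)
    ultimately show ?thesis
      using Q by (simp add: m_assoc m_lcomm[of "f B0"])
  qed
qed

lemma rescaling_from_neighbours:
  assumes B0: "B0 \<in> \<B>" and c: "c \<in> carrier G" and d: "d \<in> E \<rightarrow> carrier G"
    and near: "\<And>B. \<lbrakk>B \<in> \<B>; card (B - B0) \<le> 1\<rbrakk> \<Longrightarrow> f B = c \<otimes> finprod G d B"
  shows "B \<in> \<B> \<Longrightarrow> f B = c \<otimes> finprod G d B"
proof (induction "card (B - B0)" arbitrary: B rule: less_induct)
  case less
  show ?case
  proof (cases "card (B - B0) \<le> 1")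
    case True
    then show ?thesis using near less.prems by blast
  next
    case False
    then have "2 \<le> card (B - B0)"
      by simp
    then obtain J a b x y where "B = J \<union> {a, b}" "a \<notin> J" "b \<notin> J" "x \<notin> J" "y \<notin> J" "distinct [a, b, x, y]"
      "J \<union> {x, y} \<in> \<B>" "J \<union> {a, x} \<in> \<B>" "J \<union> {b, y} \<in> \<B>"
      "card (J \<union> {x, y} - B0) < card (B - B0)" "card (J \<union> {a, x} - B0) < card (B - B0)"
      "card (J \<union> {b, y} - B0) < card (B - B0)"
      by (rule closer_exchange_square[OF less.prems B0])
    then show ?thesis
      using rescaling_fourth_corner[OF c d] less.hyps less.prems by simp
  qed
qed

theorem plucker_function_rescaling:
  "\<exists>c d. c \<in> carrier G \<and> d \<in> E \<rightarrow> carrier G \<and> (\<forall>B\<in>\<B>. f B = c \<otimes> finprod G d B)"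
proof -
  obtain B0 where B0: "B0 \<in> \<B>"
    using bases_nonempty by blast
  define c where "c = f B0 \<otimes> inv (finprod G (potential B0) B0)"
  have c: "c \<in> carrier G"
    unfolding c_def by (simp add: finprod_closed)
  have "\<forall>B\<in>\<B>. f B = c \<otimes> finprod G (potential B0) B"
    using rescaling_from_neighbours[OF B0 c] rescaling_near_basis[OF B0] unfolding c_def by simp
  moreover have "potential B0 \<in> E \<rightarrow> carrier G"
    by simp
  ultimately show ?thesis
    using c by blast
qed

end

section \<open>Pastures\<close>

locale pasture_structure =
  fixes pm :: "'p \<Rightarrow> 'p \<Rightarrow> 'p" and one zero :: 'p and N :: "('p \<times> 'p \<times> 'p) set"
  assumes pasture: "pasture pm one zero N"
begin

lemma mult_assoc: "pm (pm a b) c = pm a (pm b c)"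
  and mult_comm: "pm a b = pm b a"
  and mult_one: "pm one a = a"
  and mult_zero: "pm zero a = zero"
  and one_neq_zero: "one \<noteq> zero"
  and mult_nonzero: "\<lbrakk>a \<noteq> zero; b \<noteq> zero\<rbrakk> \<Longrightarrow> pm a b \<noteq> zero"
  and unit_inverse: "a \<noteq> zero \<Longrightarrow> \<exists>b. b \<noteq> zero \<and> pm a b = one"
  and null_swap: "(a, b, c) \<in> N \<Longrightarrow> (b, a, c) \<in> N"
  and null_zeros_iff: "(a, zero, zero) \<in> N \<longleftrightarrow> a = zero"
  and null_scale: "(a, b, c) \<in> N \<Longrightarrow> (pm d a, pm d b, pm d c) \<in> N"
  and unique_negation_of_one: "\<exists>!e. (one, e, zero) \<in> N"
  using pasture unfolding pasture_def by meson+

definition unit_group :: "'p monoid" where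
  "unit_group = \<lparr>carrier = {a. a \<noteq> zero}, mult = pm, one = one\<rparr>"

lemma unit_group_simps [simp]:
  "carrier unit_group = {a. a \<noteq> zero}" "mult unit_group = pm" "\<one>\<^bsub>unit_group\<^esub> = one"
  unfolding unit_group_def by simp_all

lemma comm_group_unit_group: "comm_group unit_group"
proof (rule comm_groupI)
  fix x assume "x \<in> carrier unit_group"
  then obtain y where "y \<noteq> zero" "pm x y = one"
    using unit_inverse by auto
  then show "\<exists>y\<in>carrier unit_group. y \<otimes>\<^bsub>unit_group\<^esub> x = \<one>\<^bsub>unit_group\<^esub>"
    using mult_comm by auto
qed (use mult_nonzero one_neq_zero mult_assoc mult_comm mult_one in auto)

end

sublocale pasture_structure \<subseteq> units: comm_group unit_group
  by (rule comm_group_unit_group)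

context pasture_structure
begin

abbreviation eps :: 'p where
  "eps \<equiv> pepsilon one zero N"

abbreviation pinv :: "'p \<Rightarrow> 'p" where
  "pinv a \<equiv> inv\<^bsub>unit_group\<^esub> a"

lemma mult_zero_right: "pm a zero = zero"
  using mult_comm mult_zero by metis

lemma mult_one_right: "pm a one = a"
  using mult_comm mult_one by metis

lemma mult_left_commute: "pm a (pm b c) = pm b (pm a c)"
  by (metis mult_assoc mult_comm)

lemma pinv_nonzero: "a \<noteq> zero \<Longrightarrow> pinv a \<noteq> zero"
  using units.inv_closed by simp

lemma mult_pinv_left: "a \<noteq> zero \<Longrightarrow> pm (pinv a) a = one"
  using units.l_inv by simp

lemma mult_pinv_right: "a \<noteq> zero \<Longrightarrow> pm a (pinv a) = one"
  using units.r_inv by simp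

lemma mult_pinv_cancel_left: "a \<noteq> zero \<Longrightarrow> pm a (pm (pinv a) x) = x"
  by (simp flip: mult_assoc add: mult_pinv_right mult_one)

lemma pinv_mult: "\<lbrakk>a \<noteq> zero; b \<noteq> zero\<rbrakk> \<Longrightarrow> pinv (pm a b) = pm (pinv a) (pinv b)"
  using units.inv_mult by simp

lemma ratio_mult_ratio:
  "\<lbrakk>b \<noteq> zero; d \<noteq> zero\<rbrakk> \<Longrightarrow> pm (pm a (pinv b)) (pm c (pinv d)) = pm (pm a c) (pinv (pm b d))"
  by (simp add: pinv_mult mult_assoc mult_left_commute)

lemma ratio_mult_cancel: "b \<noteq> zero \<Longrightarrow> pm (pm a (pinv b)) b = a"
  by (simp add: mult_assoc mult_pinv_left mult_one_right)

lemma ratio_eq_ratio_iff: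
  "\<lbrakk>a \<noteq> zero; b \<noteq> zero; c \<noteq> zero; d \<noteq> zero\<rbrakk> \<Longrightarrow> pm a (pinv b) = pm c (pinv d) \<longleftrightarrow> pm a d = pm c b"
  using units.mult_inv_eq_mult_inv_iff by simp

lemma foldr_mult_eq_finprod:
  "\<lbrakk>distinct xs; d \<in> set xs \<rightarrow> carrier unit_group\<rbrakk> \<Longrightarrow>
    foldr (\<lambda>x acc. pm (d x) acc) xs one = finprod unit_group d (set xs)"
  by (induction xs) (auto simp: units.finprod_insert)

lemma null_one_eps: "(one, eps, zero) \<in> N"
  unfolding pepsilon_def using unique_negation_of_one by (rule theI')

lemma eps_unique: "(one, e, zero) \<in> N \<Longrightarrow> e = eps"
  unfolding pepsilon_def using unique_negation_of_one by (rule the1_equality[symmetric])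

lemma eps_nonzero: "eps \<noteq> zero"
  using null_one_eps null_zeros_iff one_neq_zero by force

lemma null_negation:
  assumes null: "(u, w, zero) \<in> N" and u: "u \<noteq> zero"
  shows "w = pm eps u"
proof -
  have "(one, pm (pinv u) w, zero) \<in> N"
    using null_scale[OF null, of "pinv u"] mult_pinv_left[OF u] mult_zero_right by simp
  then have ratio: "pm (pinv u) w = eps"
    by (rule eps_unique)
  then have "w \<noteq> zero"
    using eps_nonzero mult_zero_right by auto
  then show ?thesis
    using ratio u units.inv_solve_left'[of eps u w] eps_nonzero by (simp add: mult_comm)
qed

lemma eps_square: "pm eps eps = one"
  using null_negation[OF null_swap[OF null_one_eps] eps_nonzero] by simp

lemma eps_mult_eps: "pm eps (pm eps a) = a"
  by (simp flip: mult_assoc add: eps_square mult_one)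

lemma pinv_eps: "pinv eps = eps"
  using units.inv_equality[of eps eps] eps_square eps_nonzero by simp

lemma ratio_eps: "b \<noteq> zero \<Longrightarrow> pm (pm eps a) (pinv (pm eps b)) = pm a (pinv b)"
  using eps_nonzero by (simp add: pinv_mult pinv_eps mult_assoc mult_left_commute eps_mult_eps)

lemma fundamental_of_null:
  assumes "(z, z', eps) \<in> N" and "z \<noteq> zero" and "z' \<noteq> zero"
  shows "fundamental pm one zero N z" and "fundamental pm one zero N z'"
  using assms null_swap[OF assms(1)] unfolding fundamental_def by (auto simp: mult_one_right)

lemma null_sum_with_unique_fundamental:
  assumes unique: "\<forall>z w. fundamental pm one zero N z \<and> fundamental pm one zero N w \<longrightarrow> z = w"
    and null: "(u, pm eps w, t) \<in> N" and u: "u \<noteq> zero" and w: "w \<noteq> zero"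
  shows "w = (if t = zero then u else pm eps u)"
proof (cases "t = zero")
  case True
  then have "pm eps w = pm eps u"
    using null_negation null u by simp
  then show ?thesis
    using True u w eps_nonzero units.right_cancel[of eps w u] by (simp add: mult_comm)
next
  case False
  (* Scaling by -1/t turns the null sum into -u/t + w/t = 1, so both summands are fundamental. *)
  let ?k = "pm eps (pinv t)"
  have "(pm ?k u, pm ?k (pm eps w), pm ?k t) \<in> N"
    by (rule null_scale[OF null])
  moreover have "pm ?k t = eps"
    using False by (simp add: mult_assoc mult_pinv_left mult_one_right)
  moreover have "pm ?k (pm eps w) = pm (pinv t) w"
    by (metis mult_assoc mult_left_commute eps_square mult_one)
  ultimately have "(pm ?k u, pm (pinv t) w, eps) \<in> N"
    by simp
  then have "pm ?k u = pm (pinv t) w"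
    using unique fundamental_of_null False u w eps_nonzero pinv_nonzero mult_nonzero by metis
  then have "pm t (pm (pinv t) w) = pm t (pm (pinv t) (pm eps u))"
    by (simp add: mult_assoc mult_left_commute)
  then show ?thesis
    using False by (simp add: mult_pinv_cancel_left)
qed

end

section \<open>Representations over a pasture\<close>

locale matroid_over_pasture = pasture_structure pm one zero N + matroid_bases E \<B> r
  for pm :: "'p \<Rightarrow> 'p \<Rightarrow> 'p" and one zero N and E :: "'e set" and \<B> r
begin

lemma P_rep_nonzero_iff:
  "\<lbrakk>P_rep pm one zero N E \<B> r D; xs \<in> tuples E r\<rbrakk> \<Longrightarrow> D xs \<noteq> zero \<longleftrightarrow> set xs \<in> \<B>"
  unfolding P_rep_def Let_def by blast

lemma P_rep_permute:
  "\<lbrakk>P_rep pm one zero N E \<B> r D; xs \<in> tuples E r; \<sigma> permutes {..<r}\<rbrakk> \<Longrightarrow>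
    D (map (\<lambda>i. xs ! \<sigma> i) [0..<r]) = (if sign \<sigma> = 1 then D xs else pm eps (D xs))"
  unfolding P_rep_def Let_def by blast

lemma P_rep_plucker:
  "\<lbrakk>P_rep pm one zero N E \<B> r D; 2 \<le> r; J \<in> tuples E (r - 2); a \<in> E; b \<in> E; c \<in> E; d \<in> E\<rbrakk> \<Longrightarrow>
    (pm (D (J @ [a, b])) (D (J @ [c, d])), pm eps (pm (D (J @ [a, c])) (D (J @ [b, d]))),
     pm (D (J @ [a, d])) (D (J @ [b, c]))) \<in> N"
  unfolding P_rep_def Let_def by blast

lemma basis_list_tuple:
  assumes "distinct xs" and "set xs \<in> \<B>"
  shows "xs \<in> tuples E r"
  using basis_subset[OF assms(2)] card_basis[OF assms(2)] distinct_card[OF assms(1)]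
  unfolding tuples_def by simp

definition basis_ratio :: "('e list \<Rightarrow> 'p) \<Rightarrow> ('e list \<Rightarrow> 'p) \<Rightarrow> 'e set \<Rightarrow> 'p" where
  "basis_ratio D D' S = (if S \<in> \<B> then pm (D' (enumeration S)) (pinv (D (enumeration S))) else one)"

lemma basis_ratio_nonzero:
  assumes "P_rep pm one zero N E \<B> r D" and "P_rep pm one zero N E \<B> r D'"
  shows "basis_ratio D D' S \<noteq> zero"
proof (cases "S \<in> \<B>")
  case True
  then have enum: "distinct (enumeration S)" "set (enumeration S) = S"
    using enumeration_distinct_set[OF finite_basis] by simp_all
  then have tuple: "enumeration S \<in> tuples E r"
    using basis_list_tuple True by simp
  then have "D (enumeration S) \<noteq> zero" "D' (enumeration S) \<noteq> zero"
    using P_rep_nonzero_iff[OF assms(1) tuple] P_rep_nonzero_iff[OF assms(2) tuple] True enum by simp_all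
  then show ?thesis
    unfolding basis_ratio_def using True mult_nonzero pinv_nonzero by simp
qed (simp add: basis_ratio_def one_neq_zero)

lemma basis_ratio_list:
  assumes D: "P_rep pm one zero N E \<B> r D" and D': "P_rep pm one zero N E \<B> r D'"
    and xs: "distinct xs" "set xs \<in> \<B>"
  shows "basis_ratio D D' (set xs) = pm (D' xs) (pinv (D xs))"
proof -
  let ?ys = "enumeration (set xs)"
  have ys: "distinct ?ys" "set ?ys = set xs"
    using enumeration_distinct_set[of "set xs"] by simp_all
  then have "mset ?ys = mset xs"
    using xs(1) by (simp add: set_eq_iff_mset_eq_distinct[symmetric])
  then obtain \<sigma> where \<sigma>: "\<sigma> permutes {..<length xs}" "permute_list \<sigma> xs = ?ys"
    by (rule mset_eq_permutation)
  have tuple: "xs \<in> tuples E r" and len: "length xs = r"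
    using basis_list_tuple[OF xs] unfolding tuples_def by auto
  have "?ys = map (\<lambda>i. xs ! \<sigma> i) [0..<r]"
    using \<sigma>(2) len unfolding permute_list_def by simp
  then have "D ?ys = (if sign \<sigma> = 1 then D xs else pm eps (D xs))"
    "D' ?ys = (if sign \<sigma> = 1 then D' xs else pm eps (D' xs))"
    using P_rep_permute[OF D tuple] P_rep_permute[OF D' tuple] \<sigma>(1) len by simp_all
  moreover have "D xs \<noteq> zero"
    using P_rep_nonzero_iff[OF D tuple] xs by simp
  ultimately show ?thesis
    unfolding basis_ratio_def using xs ratio_eps by simp
qed

lemma basis_ratio_plucker:
  assumes unique: "\<forall>z w. fundamental pm one zero N z \<and> fundamental pm one zero N w \<longrightarrow> z = w"
    and D: "P_rep pm one zero N E \<B> r D" and D': "P_rep pm one zero N E \<B> r D'"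
    and notin: "a \<notin> J" "b \<notin> J" "c \<notin> J" "d \<notin> J" and dist: "distinct [a, b, c, d]"
    and bases: "J \<union> {a, b} \<in> \<B>" "J \<union> {c, d} \<in> \<B>" "J \<union> {a, c} \<in> \<B>" "J \<union> {b, d} \<in> \<B>"
  shows "pm (basis_ratio D D' (J \<union> {a, b})) (basis_ratio D D' (J \<union> {c, d})) =
    pm (basis_ratio D D' (J \<union> {a, c})) (basis_ratio D D' (J \<union> {b, d}))"
proof -
  let ?js = "enumeration J"
  have J: "finite J" "J \<subseteq> E" and elems: "a \<in> E" "b \<in> E" "c \<in> E" "d \<in> E"
    using basis_subset[OF bases(1)] basis_subset[OF bases(2)] finite_ground finite_subset by auto
  have js: "distinct ?js" "set ?js = J"
    using enumeration_distinct_set[OF J(1)] by simp_all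
  have r: "r = card J + 2"
    using card_basis[OF bases(1)] J(1) notin dist by simp
  have tuple: "?js \<in> tuples E (r - 2)"
    using js J r distinct_card[OF js(1)] unfolding tuples_def by simp
  have ext: "distinct (?js @ [x, y])" "set (?js @ [x, y]) = J \<union> {x, y}" "?js @ [x, y] \<in> tuples E r"
    if "x \<in> E" "y \<in> E" "x \<notin> J" "y \<notin> J" "x \<noteq> y" for x y
    using that js J r distinct_card[OF js(1)] unfolding tuples_def by auto
  have zero_iff: "D (?js @ [x, y]) = zero \<longleftrightarrow> D' (?js @ [x, y]) = zero"
    if "x \<in> E" "y \<in> E" "x \<notin> J" "y \<notin> J" "x \<noteq> y" for x y
    using P_rep_nonzero_iff[OF D ext(3)] P_rep_nonzero_iff[OF D' ext(3)] that by blast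
  have ratio: "basis_ratio D D' (J \<union> {x, y}) = pm (D' (?js @ [x, y])) (pinv (D (?js @ [x, y])))"
    and nonzero: "D (?js @ [x, y]) \<noteq> zero" "D' (?js @ [x, y]) \<noteq> zero"
    if "x \<in> E" "y \<in> E" "x \<notin> J" "y \<notin> J" "x \<noteq> y" "J \<union> {x, y} \<in> \<B>" for x y
    using basis_ratio_list[OF D D' ext(1)[OF that(1-5)]] P_rep_nonzero_iff[OF D ext(3)[OF that(1-5)]]
      P_rep_nonzero_iff[OF D' ext(3)[OF that(1-5)]] ext(2)[OF that(1-5)] that(6) by simp_all
  have pairs: "a \<noteq> b" "c \<noteq> d" "a \<noteq> c" "b \<noteq> d"
    using dist by auto
  note ratios = ratio[OF elems(1,2) notin(1,2) pairs(1) bases(1)]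
    ratio[OF elems(3,4) notin(3,4) pairs(2) bases(2)] ratio[OF elems(1,3) notin(1,3) pairs(3) bases(3)]
    ratio[OF elems(2,4) notin(2,4) pairs(4) bases(4)]
  note nz = nonzero[OF elems(1,2) notin(1,2) pairs(1) bases(1)]
    nonzero[OF elems(3,4) notin(3,4) pairs(2) bases(2)] nonzero[OF elems(1,3) notin(1,3) pairs(3) bases(3)]
    nonzero[OF elems(2,4) notin(2,4) pairs(4) bases(4)]
  (* For both representations the cross ratio ?w/?u is 1 or eps, according to whether ?t vanishes,
     and whether ?t vanishes depends only on the matroid. *)
  let ?u = "\<lambda>D. pm (D (?js @ [a, b])) (D (?js @ [c, d]))"
  let ?w = "\<lambda>D. pm (D (?js @ [a, c])) (D (?js @ [b, d]))"
  let ?t = "\<lambda>D. pm (D (?js @ [a, d])) (D (?js @ [b, c]))"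
  have "?w D = (if ?t D = zero then ?u D else pm eps (?u D))"
    using null_sum_with_unique_fundamental[OF unique P_rep_plucker[OF D _ tuple elems]] nz dist r
    by (simp add: mult_nonzero)
  moreover have "?w D' = (if ?t D' = zero then ?u D' else pm eps (?u D'))"
    using null_sum_with_unique_fundamental[OF unique P_rep_plucker[OF D' _ tuple elems]] nz dist r
    by (simp add: mult_nonzero)
  moreover have "?t D = zero \<longleftrightarrow> ?t D' = zero"
    using zero_iff[OF elems(1,4) notin(1,4)] zero_iff[OF elems(2,3) notin(2,3)] dist
    by (metis distinct_length_2_or_more mult_nonzero mult_zero mult_zero_right)
  ultimately have "pm (?u D') (?w D) = pm (?w D') (?u D)"
    by (auto simp: mult_assoc mult_left_commute mult_comm)
  then show ?thesis
    unfolding ratios using nz by (simp add: ratio_mult_ratio ratio_eq_ratio_iff mult_nonzero)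
qed

theorem P_rep_rescaling_equiv:
  assumes unique: "\<forall>z w. fundamental pm one zero N z \<and> fundamental pm one zero N w \<longrightarrow> z = w"
    and D: "P_rep pm one zero N E \<B> r D" and D': "P_rep pm one zero N E \<B> r D'"
  shows "rescaling_equiv pm one zero E r D D'"
proof -
  interpret ratio: plucker_function unit_group E \<B> r "basis_ratio D D'"
    by unfold_locales (use basis_ratio_nonzero[OF D D'] basis_ratio_plucker[OF unique D D'] in auto)
  obtain c d where c: "c \<in> carrier unit_group" and d: "d \<in> E \<rightarrow> carrier unit_group"
    and scaled: "\<forall>B\<in>\<B>. basis_ratio D D' B = c \<otimes>\<^bsub>unit_group\<^esub> finprod unit_group d B"
    using ratio.plucker_function_rescaling by blast
  show ?thesis
    unfolding rescaling_equiv_def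
  proof (intro exI conjI ballI)
    show "c \<noteq> zero" "\<And>e. e \<in> E \<Longrightarrow> d e \<noteq> zero"
      using c d by auto
    fix xs assume xs: "xs \<in> tuples E r"
    show "D' xs = pm c (pm (foldr (\<lambda>x acc. pm (d x) acc) xs one) (D xs))"
    proof (cases "set xs \<in> \<B>")
      case True
      have len: "length xs = r" and sub: "set xs \<subseteq> E"
        using xs unfolding tuples_def by auto
      then have dist: "distinct xs"
        using card_distinct[of xs] card_basis[OF True] by simp
      have "d \<in> set xs \<rightarrow> carrier unit_group"
        using d sub by auto
      then have "pm (D' xs) (pinv (D xs)) = pm c (foldr (\<lambda>x acc. pm (d x) acc) xs one)"
        using basis_ratio_list[OF D D' dist True] scaled True foldr_mult_eq_finprod[OF dist] by simp
      moreover have "D xs \<noteq> zero"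
        using P_rep_nonzero_iff[OF D xs] True by simp
      ultimately show ?thesis
        using ratio_mult_cancel[of "D xs" "D' xs"] by (simp add: mult_assoc)
    next
      case False
      then show ?thesis
        using P_rep_nonzero_iff[OF D xs] P_rep_nonzero_iff[OF D' xs] by (simp add: mult_zero_right)
    qed
  qed
qed

end

theorem mainTheorem12:
  fixes pm :: "'p \<Rightarrow> 'p \<Rightarrow> 'p" and one zero :: 'p and N :: "('p \<times> 'p \<times> 'p) set"
    and E :: "'e set" and \<B> :: "'e set set" and r :: nat
    and \<Delta> \<Delta>' :: "'e list \<Rightarrow> 'p"
  assumes "pasture pm one zero N"
    and "\<forall>z w. fundamental pm one zero N z \<and> fundamental pm one zero N w \<longrightarrow> z = w"
    and "matroid_rank E \<B> r"
    and "P_rep pm one zero N E \<B> r \<Delta>"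
    and "P_rep pm one zero N E \<B> r \<Delta>'"
  shows "rescaling_equiv pm one zero E r \<Delta> \<Delta>'"
proof -
  interpret matroid_over_pasture pm one zero N E \<B> r
    using assms(1,3) by unfold_locales
  show ?thesis
    using P_rep_rescaling_equiv assms(2,4,5) by blast
qed

end
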